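(* Let $a,b\geq 0$ with $a+b\leq 1$. Then (1) $4ab\leq a+b$. (2) If moreover $a,b>0$, then the function $$x\mapsto S(a,b,x)=1-\frac{a^2b^2}{(a+b+1)(a+b)}-\frac{ab(a+1)(b+1)(a+b+ab+2)}{(a+b)(a+b+1)(a+b+2)}\,x$$ is negative for all $x\geq c(a,b)$, where $$c(a,b)=\frac{(a+b)(a+b-2ab)(a+b+1)}{ab\big((a+b+1)(a+b-2ab)+ab(a+b)\big)}.$$ *)

theory Defs
  imports Complex_Main
begin

definition S :: "real \<Rightarrow> real \<Rightarrow> real \<Rightarrow> real" where
  "S a b x = 1 - (a^2 * b^2) / ((a + b + 1) * (a + b))
     - (a * b * (a + 1) * (b + 1) * (a + b + a * b + 2)) / ((a + b) * (a + b + 1) * (a + b + 2)) * x"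

definition c :: "real \<Rightarrow> real \<Rightarrow> real" where
  "c a b = ((a + b) * (a + b - 2 * a * b) * (a + b + 1))
     / (a * b * ((a + b + 1) * (a + b - 2 * a * b) + a * b * (a + b)))"

end

theory Submission
  imports Defs
begin

text \<open>
  In terms of \<open>s = a + b\<close> and \<open>p = a b\<close> (so \<open>0 < s \<le> 1\<close> and \<open>4 p \<le> s\<^sup>2\<close>),
  \<open>S\<close> is an affine function of \<open>x\<close> with negative slope, so it suffices to show \<open>S(c) < 0\<close>.
  Clearing denominators, \<open>S(c) \<cdot> s (s + 1) (s + 2) N = - p F(s, p)\<close>, where \<open>N > 0\<close> is the
  bracket in the denominator of \<open>c\<close>. The polynomial \<open>F\<close> is decreasing in \<open>p \<ge> 0\<close>, and
  \<open>F(s, s\<^sup>2/4) = s\<^sup>2/16 \<cdot> (16 + 16 s - 12 s\<^sup>2 - 14 s\<^sup>3 - 3 s\<^sup>4)\<close>, which is positive for \<open>0 < s \<le> 1\<close>.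
\<close>

definition S_sp :: "real \<Rightarrow> real \<Rightarrow> real \<Rightarrow> real" where
  "S_sp s p x = 1 - p^2 / ((s + 1) * s) - p * (s + p + 1) * (s + p + 2) / (s * (s + 1) * (s + 2)) * x"

definition c_sp :: "real \<Rightarrow> real \<Rightarrow> real" where
  "c_sp s p = s * (s - 2 * p) * (s + 1) / (p * ((s + 1) * (s - 2 * p) + p * s))"

lemma S_eq_S_sp: "S a b x = S_sp (a + b) (a * b) x"
  unfolding S_def S_sp_def by (simp add: algebra_simps power_mult_distrib)

lemma c_eq_c_sp: "c a b = c_sp (a + b) (a * b)"
  unfolding c_def c_sp_def by (simp add: algebra_simps)

lemma four_mult_le_square_add:
  fixes a b :: "'a :: linordered_idom"
  shows "4 * a * b \<le> (a + b)^2"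
proof -
  have "(a + b)^2 - 4 * a * b = (a - b)^2"
    by (simp add: power2_eq_square algebra_simps)
  then show ?thesis
    using zero_le_power2[of "a - b"] by linarith
qed

lemma S_sp_antimono:
  assumes "s > 0" "p > 0" "x \<le> y"
  shows "S_sp s p y \<le> S_sp s p x"
proof -
  have "0 \<le> p * (s + p + 1) * (s + p + 2) / (s * (s + 1) * (s + 2))"
    using assms by simp
  then have "p * (s + p + 1) * (s + p + 2) / (s * (s + 1) * (s + 2)) * x
      \<le> p * (s + p + 1) * (s + p + 2) / (s * (s + 1) * (s + 2)) * y"
    using assms(3) by (rule mult_left_mono[rotated])
  then show ?thesis
    unfolding S_sp_def by linarith
qed

lemma S_sp_at_c_sp:
  fixes s p :: real
  defines "N \<equiv> (s + 1) * (s - 2 * p) + p * s"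
  assumes "s > 0" "p > 0" "N \<noteq> 0"
  shows "S_sp s p (c_sp s p)
    = - p * (s^2 * (s + 1)^2 - 2 * p * s * (s + 1) * (s + 2) - p^2 * (3 * s^2 + 6 * s + 4))
        / (s * (s + 1) * (s + 2) * N)"
proof -
  have c_sp_N: "c_sp s p = s * (s - 2 * p) * (s + 1) / (p * N)"
    unfolding c_sp_def N_def ..
  have "s + 1 \<noteq> 0" "s + 2 \<noteq> 0"
    using assms(2) by auto
  with assms(2-) show ?thesis
    unfolding S_sp_def c_sp_N
    by (simp add: divide_simps) (simp add: N_def algebra_simps power2_eq_square)
qed

lemma sp_polynomial_pos:
  fixes s p :: real
  assumes "0 < s" "s \<le> 1" "0 \<le> p" "4 * p \<le> s^2"
  shows "s^2 * (s + 1)^2 - 2 * p * s * (s + 1) * (s + 2) - p^2 * (3 * s^2 + 6 * s + 4) > 0"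
proof -
  have "2 * p * s * (s + 1) * (s + 2) + p^2 * (3 * s^2 + 6 * s + 4)
      \<le> 2 * (s^2 / 4) * s * (s + 1) * (s + 2) + (s^2 / 4)^2 * (3 * s^2 + 6 * s + 4)"
  proof (rule add_mono)
    show "2 * p * s * (s + 1) * (s + 2) \<le> 2 * (s^2 / 4) * s * (s + 1) * (s + 2)"
      using assms by (intro mult_right_mono) auto
    have "p^2 \<le> (s^2 / 4)^2"
      using assms by (intro power_mono) auto
    then show "p^2 * (3 * s^2 + 6 * s + 4) \<le> (s^2 / 4)^2 * (3 * s^2 + 6 * s + 4)"
      using assms by (intro mult_right_mono) auto
  qed
  moreover have "s^2 * (s + 1)^2 - (2 * (s^2 / 4) * s * (s + 1) * (s + 2) + (s^2 / 4)^2 * (3 * s^2 + 6 * s + 4))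
      = s^2 / 16 * (16 + 16 * s - 12 * s^2 - 14 * s^3 - 3 * s^4)"
    by (simp add: field_simps power2_eq_square power3_eq_cube power4_eq_xxxx)
  moreover have "s^4 \<le> s" "s^3 \<le> s" "s^2 \<le> s"
    using assms power_decreasing[of 1 _ s] by auto
  then have "16 + 16 * s - 12 * s^2 - 14 * s^3 - 3 * s^4 > 0"
    using assms by linarith
  then have "s^2 / 16 * (16 + 16 * s - 12 * s^2 - 14 * s^3 - 3 * s^4) > 0"
    using assms by simp
  ultimately show ?thesis
    by linarith
qed

lemma S_sp_at_c_sp_neg:
  fixes s p :: real
  assumes "0 < s" "s \<le> 1" "0 < p" "4 * p \<le> s^2"
  shows "S_sp s p (c_sp s p) < 0"
proof -
  define N where "N = (s + 1) * (s - 2 * p) + p * s"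
  have "s^2 \<le> s"
    using assms by (simp add: power2_eq_square mult_left_le)
  then have "N > 0"
    using assms by (simp add: N_def add_pos_pos)
  moreover have "s^2 * (s + 1)^2 - 2 * p * s * (s + 1) * (s + 2) - p^2 * (3 * s^2 + 6 * s + 4) > 0"
    using assms by (intro sp_polynomial_pos) auto
  ultimately show ?thesis
    using assms S_sp_at_c_sp[of s p] unfolding N_def
    by (simp add: divide_neg_pos)
qed

theorem lemma5:
  fixes a b :: real
  assumes "a \<ge> 0" and "b \<ge> 0" and "a + b \<le> 1"
  shows "4 * a * b \<le> a + b \<and>
         (a > 0 \<and> b > 0 \<longrightarrow> (\<forall>x. x \<ge> c a b \<longrightarrow> S a b x < 0))"
proof -
  have sq_le: "4 * (a * b) \<le> (a + b)^2"
    using four_mult_le_square_add[of a b] by simp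
  moreover have "(a + b)^2 \<le> a + b"
    using assms by (simp add: power2_eq_square mult_left_le)
  ultimately have "4 * a * b \<le> a + b"
    by simp
  moreover have "S a b x < 0" if "a > 0" "b > 0" "x \<ge> c a b" for x
  proof -
    have "S_sp (a + b) (a * b) (c_sp (a + b) (a * b)) < 0"
      using that assms sq_le by (intro S_sp_at_c_sp_neg) auto
    moreover have "S_sp (a + b) (a * b) x \<le> S_sp (a + b) (a * b) (c_sp (a + b) (a * b))"
      using that by (intro S_sp_antimono) (auto simp: c_eq_c_sp)
    ultimately show ?thesis
      by (simp add: S_eq_S_sp)
  qed
  ultimately show ?thesis
    by blast
qed

end
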